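(* The following are equivalent for $(X,\tau,\mathcal{P})$: (1) $C(X)_\mathcal{P}$ is a clean ring; (2) $C^*(X)_\mathcal{P}$ is a clean ring; (3) the set of clean elements of $C(X)_\mathcal{P}$ is a subring of $C(X)_\mathcal{P}$; (4) $(X,\tau,\mathcal{P})$ is $\tau\mathcal{P}$-zero-dimensional; (5) every zero divisor of $C(X)_\mathcal{P}$ is clean; (6) $C(X)_\mathcal{P}$ has a clean prime ideal, i.e. a prime ideal all of whose elements are clean elements of $C(X)_\mathcal{P}$.
   Context: Let $(X,\tau)$ be a $T_1$ topological space and $\mathcal{P}$ an ideal of closed subsets of $X$ (a nonempty family of closed sets closed under finite unions and under taking closed subsets). For $f\colon X\to\mathbb{R}$, $D_f$ denotes the set of points of discontinuity of $f$, and $C(X)_\mathcal{P}=\{f\colon X\to\mathbb{R} : \overline{D_f}\in\mathcal{P}\}$, a commutative ring with unity under pointwise operations; $C^*(X)_\mathcal{P}$ is its subring of bounded functions. An element of a ring is clean if it is the sum of a unit and an idempotent; a ring is clean if all its elements are clean. For $f\in C(X)_\mathcal{P}$, $Z_\mathcal{P}(f)=\{x: f(x)=0\}$. A set $U\subseteq X$ is $\tau\mathcal{P}$-clopen if $U=Z_\mathcal{P}(f)=X\setminus Z_\mathcal{P}(g)$ for some $f,g\in C(X)_\mathcal{P}$. Sets $A,B\subseteq X$ are $\mathcal{P}$-completely separated if there is $f\in C(X)_\mathcal{P}$ with $f(A)\subseteq\{0\}$, $f(B)\subseteq\{1\}$. $(X,\tau,\mathcal{P})$ is $\tau\mathcal{P}$-zero-dimensional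 if for all $\mathcal{P}$-completely separated $A,B$ there is a $\tau\mathcal{P}$-clopen $U$ with $A\subseteq U\subseteq X\setminus B$. *)

theory Defs
  imports "HOL-Analysis.Analysis" "HOL-Library.Function_Algebras"
begin

(* The space X is the carrier (UNIV) of a type of class t1_space; tau is its topology. *)

definition closed_ideal :: "'a::topological_space set set \<Rightarrow> bool" where
  "closed_ideal P \<longleftrightarrow> P \<noteq> {} \<and> (\<forall>A\<in>P. closed A)
     \<and> (\<forall>A\<in>P. \<forall>B\<in>P. A \<union> B \<in> P)
     \<and> (\<forall>A\<in>P. \<forall>B. closed B \<and> B \<subseteq> A \<longrightarrow> B \<in> P)"

definition discont :: "('a::topological_space \<Rightarrow> real) \<Rightarrow> 'a set" where
  "discont f = {x. \<not> (f \<longlongrightarrow> f x) (at x)}"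

definition CP :: "'a::topological_space set set \<Rightarrow> ('a \<Rightarrow> real) set" where
  "CP P = {f. closure (discont f) \<in> P}"

definition CPstar :: "'a::topological_space set set \<Rightarrow> ('a \<Rightarrow> real) set" where
  "CPstar P = {f \<in> CP P. \<exists>M. \<forall>x. \<bar>f x\<bar> \<le> M}"

definition unit_in :: "'b::comm_ring_1 set \<Rightarrow> 'b \<Rightarrow> bool" where
  "unit_in R u \<longleftrightarrow> u \<in> R \<and> (\<exists>v\<in>R. u * v = 1)"

definition clean_in :: "'b::comm_ring_1 set \<Rightarrow> 'b \<Rightarrow> bool" where
  "clean_in R x \<longleftrightarrow> x \<in> R \<and> (\<exists>u e. unit_in R u \<and> e \<in> R \<and> e * e = e \<and> x = u + e)"

definition clean_ring :: "'b::comm_ring_1 set \<Rightarrow> bool" where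
  "clean_ring R \<longleftrightarrow> (\<forall>x\<in>R. clean_in R x)"

definition is_subring :: "'b::comm_ring_1 set \<Rightarrow> 'b set \<Rightarrow> bool" where
  "is_subring S R \<longleftrightarrow> S \<subseteq> R \<and> 0 \<in> S \<and> 1 \<in> S
     \<and> (\<forall>x\<in>S. \<forall>y\<in>S. x + y \<in> S \<and> x * y \<in> S) \<and> (\<forall>x\<in>S. - x \<in> S)"

definition zero_divisor_in :: "'b::comm_ring_1 set \<Rightarrow> 'b \<Rightarrow> bool" where
  "zero_divisor_in R x \<longleftrightarrow> x \<in> R \<and> (\<exists>y\<in>R. y \<noteq> 0 \<and> x * y = 0)"

definition prime_ideal_in :: "'b::comm_ring_1 set \<Rightarrow> 'b set \<Rightarrow> bool" where
  "prime_ideal_in R I \<longleftrightarrow> I \<subseteq> R \<and> 0 \<in> I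
     \<and> (\<forall>x\<in>I. \<forall>y\<in>I. x + y \<in> I) \<and> (\<forall>x\<in>I. - x \<in> I)
     \<and> (\<forall>r\<in>R. \<forall>x\<in>I. r * x \<in> I)
     \<and> I \<noteq> R
     \<and> (\<forall>x\<in>R. \<forall>y\<in>R. x * y \<in> I \<longrightarrow> x \<in> I \<or> y \<in> I)"

definition ZP :: "('a \<Rightarrow> real) \<Rightarrow> 'a set" where
  "ZP f = {x. f x = 0}"

definition tauP_clopen :: "'a::topological_space set set \<Rightarrow> 'a set \<Rightarrow> bool" where
  "tauP_clopen P U \<longleftrightarrow> (\<exists>f\<in>CP P. \<exists>g\<in>CP P. U = ZP f \<and> U = - ZP g)"

definition P_compl_sep :: "'a::topological_space set set \<Rightarrow> 'a set \<Rightarrow> 'a set \<Rightarrow> bool" where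
  "P_compl_sep P A B \<longleftrightarrow> (\<exists>f\<in>CP P. f ` A \<subseteq> {0} \<and> f ` B \<subseteq> {1})"

definition tauP_zero_dim :: "'a::topological_space set set \<Rightarrow> bool" where
  "tauP_zero_dim P \<longleftrightarrow> (\<forall>A B. P_compl_sep P A B \<longrightarrow>
      (\<exists>U. tauP_clopen P U \<and> A \<subseteq> U \<and> U \<subseteq> - B))"

end

theory Submission imports Defs begin

text \<open>The idempotents of \<open>C(X)\<^sub>\<P>\<close> are exactly the indicators of \<open>\<tau>\<P>\<close>-clopen sets and its
units are the nowhere vanishing functions. Hence a clean element \<open>g = u + e\<close> yields a
\<open>\<tau>\<P>\<close>-clopen set \<open>{e = 1}\<close> containing \<open>{g = 0}\<close> and missing \<open>{g = 1}\<close>; applied to the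
clipped function \<open>min 1 (max 0 (2f - 1))\<close> this separates \<open>{f = 0}\<close> from \<open>{f = 1}\<close>. Conversely,
if \<open>V\<close> is \<open>\<tau>\<P>\<close>-clopen with \<open>{f \<le> 1/3} \<subseteq> V \<subseteq> {f < 2/3}\<close>, then \<open>f - 1\<^sub>V\<close> stays at
distance \<open>1/3\<close> from \<open>0\<close>, so \<open>f = (f - 1\<^sub>V) + 1\<^sub>V\<close> is clean, even in \<open>C\<^sup>*(X)\<^sub>\<P>\<close>.
For (5) and (6) one uses that the two clipped functions \<open>min 1 (max 0 (1 - 2f))\<close> and
\<open>min 1 (max 0 (2f - 1))\<close> have product zero, so one of them is a zero divisor (or zero), and one
of them lies in any prime ideal. For (3), every \<open>f\<close> is the sum of the two units
\<open>max f 0 + 1\<close> and \<open>min f 0 - 1\<close>, so clean elements can only form a subring if all are clean.\<close>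

lemma empty_in_closed_ideal: "closed_ideal P \<Longrightarrow> {} \<in> P"
  unfolding closed_ideal_def by blast

lemma discont_subset_if_tendsto:
  assumes "\<And>x. (f \<longlongrightarrow> f x) (at x) \<Longrightarrow> (g \<longlongrightarrow> g x) (at x) \<Longrightarrow> (h \<longlongrightarrow> h x) (at x)"
  shows "discont h \<subseteq> discont f \<union> discont g"
  using assms unfolding discont_def by blast

lemma CP_if_discont_subset:
  assumes P: "closed_ideal P" and "f \<in> CP P" "g \<in> CP P"
    and h: "discont h \<subseteq> discont f \<union> discont g"
  shows "h \<in> CP P"
proof -
  have "closure (discont f) \<union> closure (discont g) \<in> P"
    using P \<open>f \<in> CP P\<close> \<open>g \<in> CP P\<close> unfolding closed_ideal_def CP_def by blast
  moreover have "closure (discont h) \<subseteq> closure (discont f) \<union> closure (discont g)"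
    using closure_mono[OF h] by (simp add: closure_Un)
  ultimately have "closure (discont h) \<in> P"
    using P unfolding closed_ideal_def by blast
  then show ?thesis unfolding CP_def by simp
qed

lemma const_in_CP: "closed_ideal P \<Longrightarrow> (\<lambda>x. c) \<in> CP P"
  unfolding CP_def discont_def using empty_in_closed_ideal by auto

lemma zero_in_CP: "closed_ideal P \<Longrightarrow> 0 \<in> CP P"
  using const_in_CP[of P 0] by (simp add: zero_fun_def)

lemma one_in_CP: "closed_ideal P \<Longrightarrow> 1 \<in> CP P"
  using const_in_CP[of P 1] by (simp add: one_fun_def)

lemma add_in_CP: "closed_ideal P \<Longrightarrow> f \<in> CP P \<Longrightarrow> g \<in> CP P \<Longrightarrow> f + g \<in> CP P"
  by (rule CP_if_discont_subset[of P f g], assumption+, rule discont_subset_if_tendsto)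
    (auto simp: plus_fun_def intro: tendsto_add)

lemma mult_in_CP: "closed_ideal P \<Longrightarrow> f \<in> CP P \<Longrightarrow> g \<in> CP P \<Longrightarrow> f * g \<in> CP P"
  by (rule CP_if_discont_subset[of P f g], assumption+, rule discont_subset_if_tendsto)
    (auto simp: times_fun_def intro: tendsto_mult)

lemma comp_in_CP:
  assumes "closed_ideal P" "f \<in> CP P" "continuous_on UNIV \<phi>"
  shows "(\<lambda>x. \<phi> (f x)) \<in> CP P"
proof (rule CP_if_discont_subset[OF assms(1,2,2)], rule discont_subset_if_tendsto)
  fix x assume "(f \<longlongrightarrow> f x) (at x)"
  moreover have "isCont \<phi> (f x)"
    using assms(3) continuous_on_eq_continuous_at by blast
  ultimately show "((\<lambda>x. \<phi> (f x)) \<longlongrightarrow> \<phi> (f x)) (at x)"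
    using isCont_tendsto_compose by blast
qed

lemma uminus_in_CP: "closed_ideal P \<Longrightarrow> f \<in> CP P \<Longrightarrow> - f \<in> CP P"
  using comp_in_CP[of P f uminus] by (simp add: fun_Compl_def continuous_on_minus continuous_on_id)

lemma diff_in_CP: "closed_ideal P \<Longrightarrow> f \<in> CP P \<Longrightarrow> g \<in> CP P \<Longrightarrow> f - g \<in> CP P"
  using add_in_CP[of P f "- g"] uminus_in_CP[of P g] by simp

lemma inverse_in_CP:
  "closed_ideal P \<Longrightarrow> f \<in> CP P \<Longrightarrow> \<forall>x. f x \<noteq> 0 \<Longrightarrow> (\<lambda>x. inverse (f x)) \<in> CP P"
  by (rule CP_if_discont_subset[of P f f], assumption+, rule discont_subset_if_tendsto)
    (auto intro: tendsto_inverse)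

lemma CPstar_subset_CP: "CPstar P \<subseteq> CP P"
  unfolding CPstar_def by blast

lemma is_subring_CP: "closed_ideal P \<Longrightarrow> is_subring (CP P) (CP P)"
  unfolding is_subring_def by (simp add: zero_in_CP one_in_CP add_in_CP mult_in_CP uminus_in_CP)

lemma prime_ideal_in_CP_vanishing_at:
  assumes "closed_ideal P"
  shows "prime_ideal_in (CP P) {f \<in> CP P. f x\<^sub>0 = 0}"
proof -
  have "{f \<in> CP P. f x\<^sub>0 = 0} \<noteq> CP P"
    using one_in_CP[OF assms] by (auto simp: one_fun_def)
  then show ?thesis unfolding prime_ideal_in_def
    by (auto simp: assms zero_in_CP add_in_CP mult_in_CP uminus_in_CP)
qed

lemma indicator_in_CP_iff:
  assumes P: "closed_ideal P"
  shows "indicator V \<in> CP P \<longleftrightarrow> tauP_clopen P V"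
proof
  assume V: "indicator V \<in> CP P"
  have "(\<lambda>x. 1 - indicator V x) \<in> CP P"
    using comp_in_CP[OF P V, of "\<lambda>t. 1 - t"] by (simp add: continuous_intros)
  moreover have "V = ZP (\<lambda>x. 1 - indicator V x :: real)" "V = - ZP (indicator V :: _ \<Rightarrow> real)"
    by (auto simp: ZP_def indicator_def)
  ultimately show "tauP_clopen P V"
    using V unfolding tauP_clopen_def by blast
next
  assume "tauP_clopen P V"
  then obtain f g where f: "f \<in> CP P" and g: "g \<in> CP P"
    and Vf: "V = ZP f" and Vg: "V = - ZP g"
    unfolding tauP_clopen_def by blast
  show "indicator V \<in> CP P"
  proof (rule CP_if_discont_subset[OF P f g], rule discont_subset_if_tendsto)
    fix x assume tf: "(f \<longlongrightarrow> f x) (at x)" and tg: "(g \<longlongrightarrow> g x) (at x)"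
    have "eventually (\<lambda>y. y \<in> V \<longleftrightarrow> x \<in> V) (at x)"
    proof (cases "x \<in> V")
      case True
      then have "eventually (\<lambda>y. g y \<noteq> 0) (at x)"
        using Vg tg tendsto_imp_eventually_ne by (fastforce simp: ZP_def)
      then show ?thesis by eventually_elim (use True Vg in \<open>auto simp: ZP_def\<close>)
    next
      case False
      then have "eventually (\<lambda>y. f y \<noteq> 0) (at x)"
        using Vf tf tendsto_imp_eventually_ne by (fastforce simp: ZP_def)
      then show ?thesis by eventually_elim (use False Vf in \<open>auto simp: ZP_def\<close>)
    qed
    then have "eventually (\<lambda>y. indicator V y = (indicator V x :: real)) (at x)"
      by eventually_elim (simp add: indicator_def)
    then show "((indicator V :: _ \<Rightarrow> real) \<longlongrightarrow> indicator V x) (at x)"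
      by (rule tendsto_eventually)
  qed
qed

lemma tauP_clopen_Compl: "tauP_clopen P V \<Longrightarrow> tauP_clopen P (- V)"
  unfolding tauP_clopen_def by auto

lemma unit_in_nonzero:
  fixes u :: "'a \<Rightarrow> real"
  assumes "unit_in S u"
  shows "u x \<noteq> 0"
proof -
  obtain v where "u * v = 1" using assms unfolding unit_in_def by blast
  from fun_cong[OF this, of x] have "u x * v x = 1" by (simp add: times_fun_def)
  then show ?thesis by auto
qed

lemma unit_in_CP_if_nonzero:
  assumes "closed_ideal P" "u \<in> CP P" "\<forall>x. u x \<noteq> 0"
  shows "unit_in (CP P) u"
proof -
  have "u * (\<lambda>x. inverse (u x)) = 1"
    using assms(3) by (simp add: fun_eq_iff)
  then show ?thesis
    unfolding unit_in_def using assms inverse_in_CP by blast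
qed

lemma unit_in_CPstar_if_bounded_away_from_zero:
  assumes "closed_ideal P" "u \<in> CPstar P" "c > 0" "\<forall>x. c \<le> \<bar>u x\<bar>"
  shows "unit_in (CPstar P) u"
proof -
  have "u \<in> CP P" using assms(2) unfolding CPstar_def by blast
  have nz: "\<forall>x. u x \<noteq> 0" using assms(3,4) by (metis abs_zero not_le)
  then have "(\<lambda>x. inverse (u x)) \<in> CP P"
    using assms(1) \<open>u \<in> CP P\<close> inverse_in_CP by blast
  moreover have "\<bar>inverse (u x)\<bar> \<le> inverse c" for x
    using assms(3,4) by (simp add: le_imp_inverse_le)
  ultimately have "(\<lambda>x. inverse (u x)) \<in> CPstar P"
    unfolding CPstar_def by blast
  moreover have "u * (\<lambda>x. inverse (u x)) = 1"
    using nz by (simp add: fun_eq_iff)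
  ultimately show ?thesis
    unfolding unit_in_def using assms(2) by blast
qed

lemma idempotent_eq_indicator:
  fixes e :: "'a \<Rightarrow> real"
  assumes "e * e = e"
  shows "e = indicator {x. e x = 1}"
proof
  fix x
  have "e x * (e x - 1) = 0"
    using fun_cong[OF assms, of x] by (simp add: algebra_simps)
  then show "e x = indicator {x. e x = 1} x" by auto
qed

lemma clean_in_if_unit_in: "unit_in R u \<Longrightarrow> 0 \<in> R \<Longrightarrow> clean_in R u"
  unfolding clean_in_def unit_in_def by force

lemma clean_in_zero:
  fixes R :: "'b::comm_ring_1 set"
  assumes "0 \<in> R" "1 \<in> R" "- 1 \<in> R"
  shows "clean_in R 0"
proof -
  have "unit_in R (- 1)"
    unfolding unit_in_def using assms(3) by (intro conjI bexI[of _ "- 1"]) auto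
  moreover have "(0::'b) = - 1 + 1" "(1::'b) * 1 = 1" by simp_all
  ultimately show ?thesis
    unfolding clean_in_def using assms(1,2) by blast
qed

lemma clopen_separation_if_clean:
  assumes P: "closed_ideal P" and S: "S \<subseteq> CP P" and g: "clean_in S g"
    and A: "g ` A \<subseteq> {0}" and B: "g ` B \<subseteq> {1}"
  shows "\<exists>U. tauP_clopen P U \<and> A \<subseteq> U \<and> U \<subseteq> - B"
proof -
  obtain u e where u: "unit_in S u" and e: "e \<in> S" "e * e = e" and "g = u + e"
    using g unfolding clean_in_def by blast
  define U where "U = {x. e x = 1}"
  have "indicator U \<in> CP P"
    using idempotent_eq_indicator[OF e(2)] e(1) S unfolding U_def by auto
  then have "tauP_clopen P U" using indicator_in_CP_iff[OF P] by blast
  moreover have "g x = u x + indicator U x" for x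
    using \<open>g = u + e\<close> idempotent_eq_indicator[OF e(2)] unfolding U_def by (metis plus_fun_apply)
  then have "A \<subseteq> U" "U \<subseteq> - B"
    using A B unit_in_nonzero[OF u] by (fastforce simp: indicator_def)+
  ultimately show ?thesis by blast
qed

definition clip01 :: "real \<Rightarrow> real" where
  "clip01 t = min 1 (max 0 t)"

lemma continuous_on_clip01 [continuous_intros]:
  "continuous_on S f \<Longrightarrow> continuous_on S (\<lambda>x. clip01 (f x))"
  unfolding clip01_def by (intro continuous_intros)

lemma clip01_mult_clip01_eq_0: "clip01 (1 - 2 * t) * clip01 (2 * t - 1) = 0"
  unfolding clip01_def by auto

lemma clip01_comp_in_CPstar:
  assumes "closed_ideal P" "f \<in> CP P" "continuous_on UNIV \<phi>"
  shows "(\<lambda>x. clip01 (\<phi> (f x))) \<in> CPstar P"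
proof -
  have "(\<lambda>x. clip01 (\<phi> (f x))) \<in> CP P"
    using comp_in_CP[OF assms(1,2), of "\<lambda>t. clip01 (\<phi> t)"] assms(3)
    by (simp add: continuous_intros)
  moreover have "\<bar>clip01 t\<bar> \<le> 1" for t
    by (simp add: clip01_def)
  ultimately show ?thesis
    unfolding CPstar_def by blast
qed

lemma clip01_factors_in_CP:
  assumes "closed_ideal P" "f \<in> CP P"
  shows "(\<lambda>x. clip01 (1 - 2 * f x)) \<in> CP P" "(\<lambda>x. clip01 (2 * f x - 1)) \<in> CP P"
    and "(\<lambda>x. clip01 (1 - 2 * f x)) * (\<lambda>x. clip01 (2 * f x - 1)) = 0"
proof -
  have "continuous_on UNIV (\<lambda>t. 1 - 2 * t :: real)" "continuous_on UNIV (\<lambda>t. 2 * t - 1 :: real)"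
    by (intro continuous_intros)+
  then show "(\<lambda>x. clip01 (1 - 2 * f x)) \<in> CP P" "(\<lambda>x. clip01 (2 * f x - 1)) \<in> CP P"
    using clip01_comp_in_CPstar[OF assms] CPstar_subset_CP by blast+
  show "(\<lambda>x. clip01 (1 - 2 * f x)) * (\<lambda>x. clip01 (2 * f x - 1)) = 0"
    by (simp add: fun_eq_iff clip01_mult_clip01_eq_0)
qed

lemma tauP_zero_dim_if_clip_clean:
  assumes P: "closed_ideal P" and S: "S \<subseteq> CP P"
    and clean: "\<And>f. f \<in> CP P \<Longrightarrow>
      clean_in S (\<lambda>x. clip01 (1 - 2 * f x)) \<or> clean_in S (\<lambda>x. clip01 (2 * f x - 1))"
  shows "tauP_zero_dim P"
  unfolding tauP_zero_dim_def P_compl_sep_def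
proof (intro allI impI)
  fix A B assume "\<exists>f\<in>CP P. f ` A \<subseteq> {0} \<and> f ` B \<subseteq> {1}"
  then obtain f where f: "f \<in> CP P" and A: "f ` A \<subseteq> {0}" and B: "f ` B \<subseteq> {1}" by blast
  have down_A: "(\<lambda>x. clip01 (1 - 2 * f x)) ` A \<subseteq> {1}"
    and down_B: "(\<lambda>x. clip01 (1 - 2 * f x)) ` B \<subseteq> {0}"
    and up_A: "(\<lambda>x. clip01 (2 * f x - 1)) ` A \<subseteq> {0}"
    and up_B: "(\<lambda>x. clip01 (2 * f x - 1)) ` B \<subseteq> {1}"
    using A B by (auto simp: clip01_def)
  from clean[OF f] show "\<exists>U. tauP_clopen P U \<and> A \<subseteq> U \<and> U \<subseteq> - B"
  proof
    assume "clean_in S (\<lambda>x. clip01 (1 - 2 * f x))"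
    then obtain U where "tauP_clopen P U" "B \<subseteq> U" "U \<subseteq> - A"
      using clopen_separation_if_clean[OF P S _ down_B down_A] by blast
    then show ?thesis using tauP_clopen_Compl by blast
  next
    assume "clean_in S (\<lambda>x. clip01 (2 * f x - 1))"
    then show ?thesis using clopen_separation_if_clean[OF P S _ up_A up_B] by blast
  qed
qed

lemma tauP_zero_dim_if_clean_ring:
  assumes P: "closed_ideal P" and "CPstar P \<subseteq> S" "S \<subseteq> CP P" and "clean_ring S"
  shows "tauP_zero_dim P"
proof (rule tauP_zero_dim_if_clip_clean[OF P \<open>S \<subseteq> CP P\<close>])
  fix f assume "f \<in> CP P"
  moreover have "continuous_on UNIV (\<lambda>t. 2 * t - 1 :: real)"
    by (intro continuous_intros)
  ultimately have "(\<lambda>x. clip01 (2 * f x - 1)) \<in> S"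
    using \<open>CPstar P \<subseteq> S\<close> clip01_comp_in_CPstar[OF P] by blast
  then show "clean_in S (\<lambda>x. clip01 (1 - 2 * f x)) \<or> clean_in S (\<lambda>x. clip01 (2 * f x - 1))"
    using \<open>clean_ring S\<close> unfolding clean_ring_def by blast
qed

lemma tauP_zero_dim_if_zero_divisors_clean:
  assumes P: "closed_ideal P" and zd: "\<forall>f. zero_divisor_in (CP P) f \<longrightarrow> clean_in (CP P) f"
  shows "tauP_zero_dim P"
proof (rule tauP_zero_dim_if_clip_clean[OF P subset_refl])
  fix f assume f: "f \<in> CP P"
  note factors = clip01_factors_in_CP[OF P f]
  show "clean_in (CP P) (\<lambda>x. clip01 (1 - 2 * f x)) \<or> clean_in (CP P) (\<lambda>x. clip01 (2 * f x - 1))"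
  proof (cases "(\<lambda>x. clip01 (2 * f x - 1)) = 0")
    case True
    then show ?thesis
      using clean_in_zero zero_in_CP[OF P] one_in_CP[OF P] uminus_in_CP[OF P] by metis
  next
    case False
    then have "zero_divisor_in (CP P) (\<lambda>x. clip01 (1 - 2 * f x))"
      unfolding zero_divisor_in_def using factors by blast
    then show ?thesis using zd by blast
  qed
qed

lemma tauP_zero_dim_if_clean_prime_ideal:
  assumes P: "closed_ideal P" and I: "prime_ideal_in (CP P) I" and clean: "\<forall>f\<in>I. clean_in (CP P) f"
  shows "tauP_zero_dim P"
proof (rule tauP_zero_dim_if_clip_clean[OF P subset_refl])
  fix f assume f: "f \<in> CP P"
  note factors = clip01_factors_in_CP[OF P f]
  have "(\<lambda>x. clip01 (1 - 2 * f x)) \<in> I \<or> (\<lambda>x. clip01 (2 * f x - 1)) \<in> I"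
    using I factors unfolding prime_ideal_in_def by metis
  then show "clean_in (CP P) (\<lambda>x. clip01 (1 - 2 * f x)) \<or> clean_in (CP P) (\<lambda>x. clip01 (2 * f x - 1))"
    using clean by blast
qed

lemma clopen_between_thirds:
  assumes P: "closed_ideal P" and zd: "tauP_zero_dim P" and f: "f \<in> CP P"
  obtains V where "tauP_clopen P V" "{x. f x \<le> 1/3} \<subseteq> V" "V \<subseteq> {x. f x < 2/3}"
proof -
  have "P_compl_sep P {x. f x \<le> 1/3} {x. f x \<ge> 2/3}"
    unfolding P_compl_sep_def
  proof (intro bexI conjI)
    show "(\<lambda>x. clip01 (3 * f x - 1)) \<in> CP P"
      using comp_in_CP[OF P f, of "\<lambda>t. clip01 (3 * t - 1)"] by (simp add: continuous_intros)
  qed (auto simp: clip01_def)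
  then show ?thesis
    using zd that unfolding tauP_zero_dim_def by fastforce
qed

lemma abs_diff_indicator_ge_third:
  fixes f :: "'a \<Rightarrow> real"
  assumes "{x. f x \<le> 1/3} \<subseteq> V" "V \<subseteq> {x. f x < 2/3}"
  shows "1/3 \<le> \<bar>f x - indicator V x\<bar>"
proof (cases "x \<in> V")
  case True
  then have "f x < 2/3" using assms(2) by blast
  with True show ?thesis by simp
next
  case False
  then have "f x > 1/3" using assms(1) by force
  with False show ?thesis by simp
qed

lemma clean_in_CP_if_clopen_between:
  assumes P: "closed_ideal P" and f: "f \<in> CP P" and V: "tauP_clopen P V"
    and "{x. f x \<le> 1/3} \<subseteq> V" "V \<subseteq> {x. f x < 2/3}"
  shows "clean_in (CP P) f"
proof -
  have e: "indicator V \<in> CP P" using indicator_in_CP_iff[OF P] V by blast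
  have "(f - indicator V) x \<noteq> 0" for x
    using abs_diff_indicator_ge_third[OF assms(4,5), of x] by (auto simp: fun_diff_def)
  then have "unit_in (CP P) (f - indicator V)"
    using unit_in_CP_if_nonzero[OF P diff_in_CP[OF P f e]] by blast
  moreover have "indicator V * indicator V = (indicator V :: _ \<Rightarrow> real)"
    by (simp add: fun_eq_iff indicator_def)
  ultimately show ?thesis
    unfolding clean_in_def using f e by (metis diff_add_cancel)
qed

lemma clean_in_CPstar_if_clopen_between:
  assumes P: "closed_ideal P" and f: "f \<in> CPstar P" and V: "tauP_clopen P V"
    and "{x. f x \<le> 1/3} \<subseteq> V" "V \<subseteq> {x. f x < 2/3}"
  shows "clean_in (CPstar P) f"
proof -
  obtain M where M: "\<forall>x. \<bar>f x\<bar> \<le> M" and fCP: "f \<in> CP P"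
    using f unfolding CPstar_def by blast
  have eCP: "indicator V \<in> CP P" using indicator_in_CP_iff[OF P] V by blast
  have "\<bar>indicator V x :: real\<bar> \<le> 1" for x
    by (simp add: indicator_def)
  with eCP have e: "indicator V \<in> CPstar P"
    unfolding CPstar_def by blast
  have "\<bar>(f - indicator V) x\<bar> \<le> M + 1" for x
    using M[rule_format, of x] by (auto simp: indicator_def)
  then have u: "f - indicator V \<in> CPstar P"
    using diff_in_CP[OF P fCP eCP] unfolding CPstar_def by blast
  have "1/3 \<le> \<bar>(f - indicator V) x\<bar>" for x
    using abs_diff_indicator_ge_third[OF assms(4,5), of x] by simp
  then have "unit_in (CPstar P) (f - indicator V)"
    using unit_in_CPstar_if_bounded_away_from_zero[OF P u, of "1/3"] by simp
  moreover have "indicator V * indicator V = (indicator V :: _ \<Rightarrow> real)"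
    by (simp add: fun_eq_iff indicator_def)
  ultimately show ?thesis
    unfolding clean_in_def using f e by (metis diff_add_cancel)
qed

lemma clean_ring_if_tauP_zero_dim:
  assumes P: "closed_ideal P" and zd: "tauP_zero_dim P"
  shows "clean_ring (CP P)" and "clean_ring (CPstar P)"
  unfolding clean_ring_def
proof safe
  fix f assume "f \<in> CP P"
  with clopen_between_thirds[OF P zd] show "clean_in (CP P) f"
    using clean_in_CP_if_clopen_between[OF P] by metis
next
  fix f assume "f \<in> CPstar P"
  with clopen_between_thirds[OF P zd] show "clean_in (CPstar P) f"
    using clean_in_CPstar_if_clopen_between[OF P] CPstar_subset_CP by (metis subsetD)
qed

lemma clean_ring_if_clean_elements_subring:
  assumes P: "closed_ideal P" and S: "is_subring {f. clean_in (CP P) f} (CP P)"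
  shows "clean_ring (CP P)"
  unfolding clean_ring_def
proof
  fix f assume f: "f \<in> CP P"
  define u\<^sub>1 where "u\<^sub>1 = (\<lambda>x. max (f x) 0 + 1)"
  define u\<^sub>2 where "u\<^sub>2 = (\<lambda>x. min (f x) 0 - 1)"
  have "u\<^sub>1 \<in> CP P" "u\<^sub>2 \<in> CP P"
    unfolding u\<^sub>1_def u\<^sub>2_def
    using comp_in_CP[OF P f, of "\<lambda>t. max t 0 + 1"] comp_in_CP[OF P f, of "\<lambda>t. min t 0 - 1"]
    by (simp_all add: continuous_intros)
  moreover have "\<forall>x. u\<^sub>1 x \<noteq> 0" "\<forall>x. u\<^sub>2 x \<noteq> 0"
    unfolding u\<^sub>1_def u\<^sub>2_def by (auto simp: max_def min_def)
  ultimately have "clean_in (CP P) u\<^sub>1" "clean_in (CP P) u\<^sub>2"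
    using unit_in_CP_if_nonzero[OF P] clean_in_if_unit_in zero_in_CP[OF P] by blast+
  then have "u\<^sub>1 + u\<^sub>2 \<in> {f. clean_in (CP P) f}"
    using S unfolding is_subring_def by blast
  moreover have "f = u\<^sub>1 + u\<^sub>2"
    unfolding u\<^sub>1_def u\<^sub>2_def by (simp add: fun_eq_iff max_def min_def)
  ultimately show "clean_in (CP P) f" by simp
qed

theorem theorem3p7:
  fixes P :: "'a::t1_space set set"
  assumes "closed_ideal P"
  shows "(clean_ring (CP P) \<longleftrightarrow> clean_ring (CPstar P))
    \<and> (clean_ring (CP P) \<longleftrightarrow> is_subring {f. clean_in (CP P) f} (CP P))
    \<and> (clean_ring (CP P) \<longleftrightarrow> tauP_zero_dim P)
    \<and> (clean_ring (CP P) \<longleftrightarrow> (\<forall>f. zero_divisor_in (CP P) f \<longrightarrow> clean_in (CP P) f))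
    \<and> (clean_ring (CP P) \<longleftrightarrow> (\<exists>I. prime_ideal_in (CP P) I \<and> (\<forall>f\<in>I. clean_in (CP P) f)))"
proof -
  note P = assms
  have "is_subring {f. clean_in (CP P) f} (CP P)"
    and "\<exists>I. prime_ideal_in (CP P) I \<and> (\<forall>f\<in>I. clean_in (CP P) f)"
    and "\<forall>f. zero_divisor_in (CP P) f \<longrightarrow> clean_in (CP P) f"
    if "clean_ring (CP P)"
  proof -
    have clean: "{f. clean_in (CP P) f} = CP P"
      using that unfolding clean_ring_def clean_in_def by blast
    then show "is_subring {f. clean_in (CP P) f} (CP P)"
      using is_subring_CP[OF P] by simp
    show "\<exists>I. prime_ideal_in (CP P) I \<and> (\<forall>f\<in>I. clean_in (CP P) f)"
      using prime_ideal_in_CP_vanishing_at[OF P] clean by blast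
    show "\<forall>f. zero_divisor_in (CP P) f \<longrightarrow> clean_in (CP P) f"
      using clean unfolding zero_divisor_in_def by blast
  qed
  then show ?thesis
    using clean_ring_if_tauP_zero_dim[OF P] clean_ring_if_clean_elements_subring[OF P]
      tauP_zero_dim_if_clean_ring[OF P CPstar_subset_CP subset_refl]
      tauP_zero_dim_if_clean_ring[OF P subset_refl CPstar_subset_CP]
      tauP_zero_dim_if_zero_divisors_clean[OF P] tauP_zero_dim_if_clean_prime_ideal[OF P]
    by blast
qed

end
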